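(* Assume (F1)–(F3), let $\tau\ge0$, $c\ge0$, and suppose $f'(w)<0$ for $w_0\le w<1$. If $w$ is a solution of problem (P) with these $\tau,c$ such that $w'(x)\le0$ for all $x\in\mathbb R$, then $w'(x)<0$ for all $x\in\mathbb R$.
   Context: $f:\mathbb R\to\mathbb R$ is $C^4$ with bounded derivatives and satisfies: (F1) $f(w)>0$ for $0\le w<1$, $f(1)=0$, $f'(1)>-1$; (F2) $f(0)>1$, $f'(0)>0$, and $f(w)>1$ for $0\le w<w_*$ for some $w_*\in(0,1)$; (F3) the equation $f(w)=1-w$ has exactly one solution $w_0$ in $(0,1)$, and $f'(w_0)<-1$; hence $f(w)>1-w$ for $0\le w<w_0$ and $f(w)<1-w$ for $w_0<w<1$. Problem (P) for given $\tau\ge0$, $c\in\mathbb R$: find $w\in C^2(\mathbb R)$ with $w''(x)+cw'(x)+w(x)\big(1-w(x)-f(w(x+c\tau))\big)=0$ for all $x$, and $w(-\infty)=1$, $w(+\infty)=0$. *)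

theory Defs
  imports "HOL-Analysis.Analysis"
begin

definition C4_bdd_deriv :: "(real \<Rightarrow> real) \<Rightarrow> bool" where
  "C4_bdd_deriv f \<longleftrightarrow>
     (\<forall>k<4. \<forall>x. (deriv ^^ k) f differentiable at x) \<and>
     continuous_on UNIV ((deriv ^^ 4) f) \<and>
     (\<forall>k\<in>{1..4}. bounded (range ((deriv ^^ k) f)))"

definition hypF1 :: "(real \<Rightarrow> real) \<Rightarrow> bool" where
  "hypF1 f \<longleftrightarrow> (\<forall>w. 0 \<le> w \<and> w < 1 \<longrightarrow> f w > 0) \<and> f 1 = 0 \<and> deriv f 1 > -1"

definition hypF2 :: "(real \<Rightarrow> real) \<Rightarrow> bool" where
  "hypF2 f \<longleftrightarrow> f 0 > 1 \<and> deriv f 0 > 0 \<and>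
     (\<exists>ws. 0 < ws \<and> ws < 1 \<and> (\<forall>w. 0 \<le> w \<and> w < ws \<longrightarrow> f w > 1))"

definition hypF3 :: "(real \<Rightarrow> real) \<Rightarrow> real \<Rightarrow> bool" where
  "hypF3 f w0 \<longleftrightarrow> 0 < w0 \<and> w0 < 1 \<and> f w0 = 1 - w0 \<and>
     (\<forall>w. 0 < w \<and> w < 1 \<and> f w = 1 - w \<longrightarrow> w = w0) \<and> deriv f w0 < -1"

definition solves_P :: "(real \<Rightarrow> real) \<Rightarrow> real \<Rightarrow> real \<Rightarrow> (real \<Rightarrow> real) \<Rightarrow> bool" where
  "solves_P f \<tau> c w \<longleftrightarrow>
     (\<forall>x. w differentiable at x) \<and> (\<forall>x. deriv w differentiable at x) \<and>
     continuous_on UNIV (deriv (deriv w)) \<and>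
     (\<forall>x. deriv (deriv w) x + c * deriv w x + w x * (1 - w x - f (w (x + c * \<tau>))) = 0) \<and>
     (w \<longlongrightarrow> 1) at_bot \<and> (w \<longlongrightarrow> 0) at_top"

end

theory Submission
  imports Defs
begin

(*
  Suppose w'(x0) = 0. Since w' <= 0, w' has a maximum at x0, so w''(x0) = 0 and the equation gives
  w(x0) (1 - w(x0) - f(w(x0 + c tau))) = 0. If w(x0) = 0, or if c tau = 0, then w(x0) is a rest state
  of the equation and an energy (Gronwall) estimate makes w constant, contradicting the limits.
  Otherwise b = w(x0 + c tau) satisfies f(b) <= 1 - b, hence lies in [w0, 1) by (F3) or equals 1.
  Differentiating the equation once more gives w'''(x0) = w(x0) f'(b) w'(x0 + c tau), which must be
  <= 0 at the maximum of w'; as f'(b) < 0 this forces w'(x0 + c tau) = 0 with w(x0 + c tau) >= w0.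
  Iterating, w(x0 + n c tau) >= w0 > 0 for all n >= 1, contradicting w(+inf) = 0.
*)

lemma gronwall_zero_right:
  fixes E E' :: "real \<Rightarrow> real"
  assumes E': "\<And>x. (E has_real_derivative E' x) (at x)"
    and bound: "\<And>x. \<bar>E' x\<bar> \<le> K * E x" and nonneg: "\<And>x. E x \<ge> 0"
    and zero: "E x0 = 0" and "x0 \<le> x"
  shows "E x = 0"
proof -
  have "E x * exp (-K * x) \<le> E x0 * exp (-K * x0)"
  proof (rule DERIV_nonpos_imp_nonincreasing[OF \<open>x0 \<le> x\<close>])
    fix y
    have "((\<lambda>y. E y * exp (-K * y)) has_real_derivative (E' y - K * E y) * exp (-K * y)) (at y)"
      by (auto intro!: derivative_eq_intros E' simp: algebra_simps)
    moreover have "(E' y - K * E y) * exp (-K * y) \<le> 0"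
      using bound[of y] by (intro mult_nonpos_nonneg) auto
    ultimately show "\<exists>l. ((\<lambda>y. E y * exp (-K * y)) has_real_derivative l) (at y) \<and> l \<le> 0"
      by blast
  qed
  then show ?thesis
    using zero nonneg[of x] by (simp add: mult_le_0_iff)
qed

lemma gronwall_zero:
  fixes E E' :: "real \<Rightarrow> real"
  assumes E': "\<And>x. (E has_real_derivative E' x) (at x)"
    and bound: "\<And>x. \<bar>E' x\<bar> \<le> K * E x" and nonneg: "\<And>x. E x \<ge> 0"
    and zero: "E x0 = 0"
  shows "E x = 0"
proof (cases "x0 \<le> x")
  case True
  then show ?thesis using gronwall_zero_right[OF E' bound nonneg zero] by blast
next
  case False
  have "((\<lambda>y. E (- y)) has_real_derivative E' (- y) * (- 1)) (at y)" for y
    by (rule DERIV_chain2[OF E']) (auto intro!: derivative_eq_intros)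
  from gronwall_zero_right[OF this, of K "- x0" "- x"] show ?thesis
    using False bound nonneg zero by simp
qed

lemma ode2_rest_state_unique:
  fixes w :: "real \<Rightarrow> real"
  assumes w': "\<And>x. (w has_real_derivative deriv w x) (at x)"
    and w'': "\<And>x. (deriv w has_real_derivative deriv (deriv w) x) (at x)"
    and bound: "\<And>x. \<bar>deriv (deriv w) x + c * deriv w x\<bar> \<le> L * \<bar>w x - a\<bar>"
    and "L \<ge> 0" and rest: "w x0 = a" "deriv w x0 = 0"
  shows "w x = a"
proof -
  define E where "E x = (w x - a)\<^sup>2 + (deriv w x)\<^sup>2" for x
  define E' where "E' x = 2 * ((w x - a) * deriv w x + deriv w x * deriv (deriv w) x)" for x
  have "E x = 0"
  proof (rule gronwall_zero[of E E' "1 + L + 2 * \<bar>c\<bar>" x0])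
    fix x
    show "(E has_real_derivative E' x) (at x)"
      unfolding E_def[abs_def] E'_def by (auto intro!: derivative_eq_intros w' w'')
    show "E x \<ge> 0" unfolding E_def by simp
    let ?p = "w x - a" and ?q = "deriv w x" and ?r = "deriv (deriv w) x"
    have r: "\<bar>?r\<bar> \<le> \<bar>c\<bar> * \<bar>?q\<bar> + L * \<bar>?p\<bar>"
      using bound[of x] abs_triangle_ineq4[of "?r + c * ?q" "c * ?q"] by (simp add: abs_mult)
    have am_gm: "2 * \<bar>?p\<bar> * \<bar>?q\<bar> \<le> ?p\<^sup>2 + ?q\<^sup>2"
      using power2_diff[of "\<bar>?p\<bar>" "\<bar>?q\<bar>"] zero_le_power2[of "\<bar>?p\<bar> - \<bar>?q\<bar>"] by simp
    have "\<bar>E' x\<bar> \<le> 2 * (\<bar>?p\<bar> * \<bar>?q\<bar> + \<bar>?q\<bar> * \<bar>?r\<bar>)"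
      unfolding E'_def abs_mult abs_numeral
      using abs_triangle_ineq[of "?p * ?q" "?q * ?r"] by (simp add: abs_mult)
    also have "\<dots> \<le> 2 * (\<bar>?p\<bar> * \<bar>?q\<bar> + \<bar>?q\<bar> * (\<bar>c\<bar> * \<bar>?q\<bar> + L * \<bar>?p\<bar>))"
      using r by (simp add: mult_left_mono)
    also have "\<dots> = (1 + L) * (2 * \<bar>?p\<bar> * \<bar>?q\<bar>) + 2 * \<bar>c\<bar> * ?q\<^sup>2"
      by (simp add: algebra_simps power2_eq_square)
    also have "\<dots> \<le> (1 + L) * (?p\<^sup>2 + ?q\<^sup>2) + 2 * \<bar>c\<bar> * (?p\<^sup>2 + ?q\<^sup>2)"
      using am_gm \<open>L \<ge> 0\<close> by (intro add_mono mult_left_mono) auto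
    also have "\<dots> = (1 + L + 2 * \<bar>c\<bar>) * E x" unfolding E_def by (simp add: algebra_simps)
    finally show "\<bar>E' x\<bar> \<le> (1 + L + 2 * \<bar>c\<bar>) * E x" .
  next
    show "E x0 = 0" unfolding E_def using rest by simp
  qed
  then show ?thesis unfolding E_def by (simp add: add_nonneg_eq_0_iff)
qed

lemma max_imp_second_deriv_nonpos:
  fixes g g' :: "real \<Rightarrow> real"
  assumes g': "\<And>y. (g has_real_derivative g' y) (at y)"
    and g'': "(g' has_real_derivative D) (at x)"
    and max: "\<And>y. g y \<le> g x"
  shows "D \<le> 0"
proof (rule ccontr)
  assume "\<not> D \<le> 0"
  then obtain d where "d > 0" and inc: "\<And>h. 0 < h \<Longrightarrow> h < d \<Longrightarrow> g' x < g' (x + h)"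
    using DERIV_pos_inc_right[OF g''] by auto
  have "g' x = 0" using DERIV_local_max[OF g'[of x], of 1] max by auto
  obtain z where z: "x < z" "z < x + d / 2" and mvt: "g (x + d / 2) - g x = d / 2 * g' z"
    using MVT2[of x "x + d / 2" g g'] \<open>d > 0\<close> g' by auto
  have "g' z > 0" using inc[of "z - x"] z \<open>g' x = 0\<close> by auto
  then have "d / 2 * g' z > 0" using \<open>d > 0\<close> by simp
  then have "g (x + d / 2) > g x" using mvt by linarith
  then show False using max[of "x + d / 2"] by simp
qed

lemma antimono_between_limits:
  fixes w :: "real \<Rightarrow> real"
  assumes antimono: "\<And>x y. x \<le> y \<Longrightarrow> w y \<le> w x"
    and "(w \<longlongrightarrow> a) at_bot" and "(w \<longlongrightarrow> b) at_top"
  shows "b \<le> w x" and "w x \<le> a"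
proof -
  show "b \<le> w x"
    by (rule tendsto_upperbound[OF \<open>(w \<longlongrightarrow> b) at_top\<close>])
      (use antimono in \<open>auto simp: eventually_at_top_linorder\<close>)
  show "w x \<le> a"
    by (rule tendsto_lowerbound[OF \<open>(w \<longlongrightarrow> a) at_bot\<close>])
      (use antimono in \<open>auto simp: eventually_at_bot_linorder\<close>)
qed

lemma hypF3_root_le:
  assumes "continuous_on UNIV f" and "f 0 > 1" and "hypF3 f w0"
    and "0 \<le> v" "v < 1" "f v \<le> 1 - v"
  shows "w0 \<le> v"
proof -
  have "continuous_on {0..v} (\<lambda>u. f u - (1 - u))"
    using assms(1) by (intro continuous_intros) (auto intro: continuous_on_subset)
  then obtain u where u: "0 \<le> u" "u \<le> v" "f u - (1 - u) = 0"
    using IVT2'[of "\<lambda>u. f u - (1 - u)" v 0 0] assms(2,4,6) by auto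
  have "u > 0" using u \<open>f 0 > 1\<close> by (cases "u = 0") auto
  then have "u = w0" using u \<open>hypF3 f w0\<close> \<open>v < 1\<close> unfolding hypF3_def by auto
  then show ?thesis using u by simp
qed

text \<open>The parameter \<open>s\<close> stands for the shift \<open>c * \<tau>\<close> of problem (P).\<close>

locale nonincreasing_front =
  fixes f w :: "real \<Rightarrow> real" and c s w0 B :: real
  assumes f_deriv: "\<And>v. (f has_real_derivative deriv f v) (at v)"
    and deriv_f_bound: "\<And>v. \<bar>deriv f v\<bar> \<le> B"
    and F1: "hypF1 f" and F2: "hypF2 f" and F3: "hypF3 f w0"
    and deriv_f_neg: "\<And>v. w0 \<le> v \<Longrightarrow> v < 1 \<Longrightarrow> deriv f v < 0"
    and shift_nonneg: "s \<ge> 0"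
    and w_deriv: "\<And>x. (w has_real_derivative deriv w x) (at x)"
    and w_deriv2: "\<And>x. (deriv w has_real_derivative deriv (deriv w) x) (at x)"
    and front_eq: "\<And>x. deriv (deriv w) x + c * deriv w x + w x * (1 - w x - f (w (x + s))) = 0"
    and w_at_bot: "(w \<longlongrightarrow> 1) at_bot" and w_at_top: "(w \<longlongrightarrow> 0) at_top"
    and deriv_w_nonpos: "\<And>x. deriv w x \<le> 0"
begin

lemma w_antimono: "x \<le> y \<Longrightarrow> w y \<le> w x"
  using DERIV_nonpos_imp_nonincreasing[of x y w] w_deriv deriv_w_nonpos by blast

lemma w_nonneg: "0 \<le> w x" and w_le_1: "w x \<le> 1"
  using antimono_between_limits[OF w_antimono w_at_bot w_at_top] by auto

lemma w_not_constant: "\<not> (\<forall>x. w x = a)"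
proof
  assume "\<forall>x. w x = a"
  then have "w = (\<lambda>x. a)" by auto
  then have "a = 1" and "a = 0"
    using w_at_bot w_at_top by (simp_all add: tendsto_const_iff)
  then show False by simp
qed

lemma B_nonneg: "B \<ge> 0"
  using deriv_f_bound[of 0] by linarith

lemma f_lipschitz: "\<bar>f u - f v\<bar> \<le> B * \<bar>u - v\<bar>"
  using field_differentiable_bound[of UNIV f "deriv f" B u v] f_deriv deriv_f_bound
  by (auto simp: has_real_derivative_iff_has_vector_derivative)

lemma f_bound_unit: "0 \<le> v \<Longrightarrow> v \<le> 1 \<Longrightarrow> \<bar>f v\<bar> \<le> \<bar>f 0\<bar> + B"
  using f_lipschitz[of v 0] B_nonneg by (smt (verit) mult_left_le)

lemma deriv2_zero_at_critical: "deriv w x = 0 \<Longrightarrow> deriv (deriv w) x = 0"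
  using DERIV_local_max[OF w_deriv2[of x], of 1] deriv_w_nonpos by auto

lemma critical_point_balance: "deriv w x = 0 \<Longrightarrow> w x * (1 - w x - f (w (x + s))) = 0"
  using front_eq[of x] deriv2_zero_at_critical[of x] by simp

lemma deriv3_at_critical:
  assumes "deriv w x = 0"
  shows "(deriv (deriv w) has_real_derivative w x * deriv f (w (x + s)) * deriv w (x + s)) (at x)"
proof -
  have eq: "deriv (deriv w) = (\<lambda>y. - c * deriv w y - w y * (1 - w y - f (w (y + s))))"
    using front_eq by (intro ext) (simp add: algebra_simps eq_neg_iff_add_eq_0)
  have "((\<lambda>y. w (y + s)) has_real_derivative deriv w (x + s)) (at x)"
    using DERIV_shift w_deriv by blast
  then have "((\<lambda>y. f (w (y + s))) has_real_derivative deriv f (w (x + s)) * deriv w (x + s)) (at x)"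
    by (rule DERIV_chain2[OF f_deriv])
  then have "((\<lambda>y. - c * deriv w y - w y * (1 - w y - f (w (y + s)))) has_real_derivative
      - c * deriv (deriv w) x - (deriv w x * (1 - w x - f (w (x + s)))
        + w x * (0 - deriv w x - deriv f (w (x + s)) * deriv w (x + s)))) (at x)"
    by (auto intro!: derivative_eq_intros w_deriv w_deriv2)
  then show ?thesis
    unfolding eq[symmetric] using assms deriv2_zero_at_critical[OF assms] by (simp add: mult.assoc)
qed

lemma critical_point_shift:
  assumes crit: "deriv w x = 0" and pos: "w x > 0"
  shows "deriv w (x + s) = 0" and "w0 \<le> w (x + s)"
proof -
  define b where "b = w (x + s)"
  have "b \<le> w x" unfolding b_def using w_antimono shift_nonneg by simp
  have fb: "f b = 1 - w x" using critical_point_balance[OF crit] pos unfolding b_def by simp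
  have "b = 1 \<or> w0 \<le> b \<and> b < 1"
  proof (cases "w x = 1")
    case True
    have "b < 1 \<Longrightarrow> f b > 0"
      using F1 w_nonneg[of "x + s"] unfolding hypF1_def b_def by blast
    then have "\<not> b < 1" using fb True by auto
    then show ?thesis using \<open>b \<le> w x\<close> True by auto
  next
    case False
    then have "b < 1" using \<open>b \<le> w x\<close> w_le_1[of x] by simp
    moreover have "w0 \<le> b"
    proof (rule hypF3_root_le[OF _ _ F3])
      show "continuous_on UNIV f"
        using f_deriv by (meson DERIV_isCont continuous_at_imp_continuous_on)
      show "f 0 > 1" using F2 unfolding hypF2_def by simp
    qed (use \<open>b < 1\<close> fb \<open>b \<le> w x\<close> w_nonneg in \<open>auto simp: b_def\<close>)
    ultimately show ?thesis by simp
  qed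
  moreover have "w0 < 1" using F3 unfolding hypF3_def by simp
  ultimately show "w0 \<le> w (x + s)" unfolding b_def by auto
  show "deriv w (x + s) = 0"
  proof (cases "b = 1")
    case True
    then have "\<forall>y. \<bar>x + s - y\<bar> < 1 \<longrightarrow> w y \<le> w (x + s)"
      using w_le_1 unfolding b_def by simp
    then show ?thesis by (rule DERIV_local_max[OF w_deriv zero_less_one])
  next
    case False
    then have "deriv f b < 0" using \<open>b = 1 \<or> w0 \<le> b \<and> b < 1\<close> deriv_f_neg by blast
    \<comment> \<open>\<open>deriv w\<close> is maximal at \<open>x\<close>, so its derivative there cannot increase.\<close>
    have "w x * deriv f b * deriv w (x + s) \<le> 0"
      unfolding b_def
      by (rule max_imp_second_deriv_nonpos[OF w_deriv2 deriv3_at_critical[OF crit]])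
        (use crit deriv_w_nonpos in simp)
    then have "deriv f b * deriv w (x + s) \<le> 0"
      using pos by (simp add: mult.assoc mult_le_0_iff)
    show ?thesis
    proof (rule ccontr)
      assume "deriv w (x + s) \<noteq> 0"
      then have "deriv w (x + s) < 0" using deriv_w_nonpos[of "x + s"] by simp
      with \<open>deriv f b < 0\<close> have "deriv f b * deriv w (x + s) > 0" by (rule mult_neg_neg)
      with \<open>deriv f b * deriv w (x + s) \<le> 0\<close> show False by simp
    qed
  qed
qed

lemma no_critical_point_at_zero:
  assumes "w x0 = 0"
  shows "deriv w x0 \<noteq> 0"
proof
  assume "deriv w x0 = 0"
  have "w x = 0" for x
  proof (rule ode2_rest_state_unique[OF w_deriv w_deriv2 _ _ assms \<open>deriv w x0 = 0\<close>,
        where L = "2 + \<bar>f 0\<bar> + B"])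
    fix y
    have "\<bar>1 - w y - f (w (y + s))\<bar> \<le> 2 + \<bar>f 0\<bar> + B"
      using f_bound_unit[OF w_nonneg w_le_1, of "y + s"] w_nonneg[of y] w_le_1[of y] by linarith
    then have "\<bar>w y * (1 - w y - f (w (y + s)))\<bar> \<le> (2 + \<bar>f 0\<bar> + B) * \<bar>w y - 0\<bar>"
      unfolding abs_mult diff_zero using w_nonneg[of y] by (simp add: mult.commute mult_left_mono)
    moreover have "deriv (deriv w) y + c * deriv w y = - (w y * (1 - w y - f (w (y + s))))"
      using front_eq[of y] by linarith
    ultimately show "\<bar>deriv (deriv w) y + c * deriv w y\<bar> \<le> (2 + \<bar>f 0\<bar> + B) * \<bar>w y - 0\<bar>"
      by simp
  qed (use B_nonneg in auto)
  then show False using w_not_constant by blast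
qed

lemma no_critical_point_undelayed:
  assumes "s = 0"
  shows "deriv w x0 \<noteq> 0"
proof
  assume crit: "deriv w x0 = 0"
  define a where "a = w x0"
  define L where "L = 3 + \<bar>f 0\<bar> + 2 * B"
  have a: "0 \<le> a" "a \<le> 1" unfolding a_def using w_nonneg w_le_1 by auto
  have balance: "a * (1 - a - f a) = 0"
    using critical_point_balance[OF crit] assms unfolding a_def by simp
  have "w x = a" for x
  proof (rule ode2_rest_state_unique[OF w_deriv w_deriv2 _ _ a_def[symmetric] crit, where L = L])
    fix y
    define u where "u = w y"
    have u: "0 \<le> u" "u \<le> 1" unfolding u_def using w_nonneg w_le_1 by auto
    have split: "u * (1 - u - f u) - a * (1 - a - f a) = (u - a) * (1 - u - a - f u) - a * (f u - f a)"
      by (simp add: algebra_simps)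
    have "\<bar>1 - u - a - f u\<bar> \<le> 3 + \<bar>f 0\<bar> + B"
      using f_bound_unit[OF u] u a by linarith
    then have bound1: "\<bar>(u - a) * (1 - u - a - f u)\<bar> \<le> \<bar>u - a\<bar> * (3 + \<bar>f 0\<bar> + B)"
      unfolding abs_mult by (intro mult_left_mono) auto
    have bound2: "\<bar>a * (f u - f a)\<bar> \<le> B * \<bar>u - a\<bar>"
      using mult_right_mono[OF \<open>a \<le> 1\<close> abs_ge_zero[of "f u - f a"]] f_lipschitz[of u a] a
      by (simp add: abs_mult)
    have "deriv (deriv w) y + c * deriv w y = - (u * (1 - u - f u))"
      using front_eq[of y] unfolding assms add_0_right u_def by linarith
    then have "\<bar>deriv (deriv w) y + c * deriv w y\<bar>
        = \<bar>(u - a) * (1 - u - a - f u) - a * (f u - f a)\<bar>"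
      using balance split by (metis abs_minus_cancel diff_zero)
    also have "\<dots> \<le> \<bar>(u - a) * (1 - u - a - f u)\<bar> + \<bar>a * (f u - f a)\<bar>"
      by (rule abs_triangle_ineq4)
    also have "\<dots> \<le> \<bar>u - a\<bar> * (3 + \<bar>f 0\<bar> + B) + B * \<bar>u - a\<bar>"
      using bound1 bound2 by (rule add_mono)
    also have "\<dots> = L * \<bar>w y - a\<bar>"
      unfolding L_def u_def by (simp add: algebra_simps)
    finally show "\<bar>deriv (deriv w) y + c * deriv w y\<bar> \<le> L * \<bar>w y - a\<bar>" .
  qed (use B_nonneg in \<open>simp add: L_def\<close>)
  then show False using w_not_constant by blast
qed

lemma no_critical_point_delayed:
  assumes "s > 0" and "w x0 > 0"
  shows "deriv w x0 \<noteq> 0"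
proof
  assume crit: "deriv w x0 = 0"
  have "w0 > 0" using F3 unfolding hypF3_def by simp
  have iterate: "deriv w (x0 + real (Suc n) * s) = 0 \<and> w0 \<le> w (x0 + real (Suc n) * s)" for n
  proof (induction n)
    case 0
    show ?case using critical_point_shift[OF crit \<open>w x0 > 0\<close>] by simp
  next
    case (Suc n)
    then have "w (x0 + real (Suc n) * s) > 0" using \<open>w0 > 0\<close> by linarith
    then show ?case
      using critical_point_shift[of "x0 + real (Suc n) * s"] Suc by (simp add: algebra_simps)
  qed
  obtain N where N: "\<And>y. y \<ge> N \<Longrightarrow> w y < w0"
    using order_tendstoD(2)[OF w_at_top \<open>w0 > 0\<close>] unfolding eventually_at_top_linorder by blast
  obtain n where "N - x0 < real n * s"
    using ex_less_of_nat_mult[OF \<open>s > 0\<close>] by blast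
  then have "x0 + real (Suc n) * s \<ge> N" using \<open>s > 0\<close> by (simp add: algebra_simps)
  then show False using N iterate[of n] by fastforce
qed

theorem deriv_w_neg: "deriv w x < 0"
proof -
  have "deriv w x \<noteq> 0"
  proof (cases "w x = 0")
    case True
    then show ?thesis by (rule no_critical_point_at_zero)
  next
    case False
    then have "w x > 0" using w_nonneg[of x] by simp
    then show ?thesis
      using no_critical_point_undelayed no_critical_point_delayed shift_nonneg by fastforce
  qed
  then show ?thesis using deriv_w_nonpos[of x] by simp
qed

end

lemma C4_bdd_deriv_imp_bounded_deriv:
  assumes "C4_bdd_deriv f"
  obtains B where "\<And>v. (f has_real_derivative deriv f v) (at v)" and "\<And>v. \<bar>deriv f v\<bar> \<le> B"
proof -
  have "\<forall>k<4. \<forall>v. (deriv ^^ k) f differentiable at v"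
    using assms unfolding C4_bdd_deriv_def by blast
  then have "f differentiable at v" for v by (metis funpow_0 zero_less_numeral)
  then have "(f has_real_derivative deriv f v) (at v)" for v
    by (simp add: DERIV_deriv_iff_real_differentiable)
  moreover have "\<forall>k\<in>{1..4}. bounded (range ((deriv ^^ k) f))"
    using assms unfolding C4_bdd_deriv_def by blast
  then have "bounded (range ((deriv ^^ 1) f))" by (rule bspec) simp
  then have "bounded (range (deriv f))" by simp
  then obtain B where "\<And>v. \<bar>deriv f v\<bar> \<le> B" unfolding bounded_real by auto
  ultimately show ?thesis using that by blast
qed

theorem lemma3p1:
  fixes f w :: "real \<Rightarrow> real" and \<tau> c w0 :: real
  assumes "C4_bdd_deriv f" and "hypF1 f" and "hypF2 f" and "hypF3 f w0"
    and "\<tau> \<ge> 0" and "c \<ge> 0"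
    and "\<forall>v. w0 \<le> v \<and> v < 1 \<longrightarrow> deriv f v < 0"
    and "solves_P f \<tau> c w"
    and "\<forall>x. deriv w x \<le> 0"
  shows "\<forall>x. deriv w x < 0"
proof -
  obtain B where "\<And>v. (f has_real_derivative deriv f v) (at v)" and "\<And>v. \<bar>deriv f v\<bar> \<le> B"
    using C4_bdd_deriv_imp_bounded_deriv[OF \<open>C4_bdd_deriv f\<close>] by blast
  moreover have "\<And>x. (w has_real_derivative deriv w x) (at x)"
    and "\<And>x. (deriv w has_real_derivative deriv (deriv w) x) (at x)"
    using \<open>solves_P f \<tau> c w\<close> unfolding solves_P_def
    by (simp_all add: DERIV_deriv_iff_real_differentiable)
  ultimately interpret nonincreasing_front f w c "c * \<tau>" w0 B
    using assms unfolding solves_P_def by unfold_locales auto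
  show ?thesis using deriv_w_neg by blast
qed

end
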